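(* Let $\theta\in(\pi,2\pi)$. Then for all $x,y\in S_\theta$, $s_{S_\theta}(x,y)\le\sqrt2\sin(\theta/4)\,p_{S_\theta}(x,y)$, and the constant $\sqrt2\sin(\theta/4)$ is sharp.
   Context: $S_\theta=\{x\in\mathbb{C}:0<\arg(x)<\theta\}$. For a domain $G\subsetneq\mathbb{C}$, $d_G(x)=\inf\{|x-z|:z\in\partial G\}$, $s_G(x,y)=\frac{|x-y|}{\inf_{z\in\partial G}(|x-z|+|z-y|)}$, $p_G(x,y)=\frac{|x-y|}{\sqrt{|x-y|^2+4d_G(x)d_G(y)}}$. *)

theory Defs
  imports "HOL-Analysis.Analysis"
begin

definition sector :: "real \<Rightarrow> complex set" where
  "sector \<theta> = {x. 0 < Arg2pi x \<and> Arg2pi x < \<theta>}"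

definition dG :: "complex set \<Rightarrow> complex \<Rightarrow> real" where
  "dG G x = Inf {cmod (x - z) | z. z \<in> frontier G}"

definition sG :: "complex set \<Rightarrow> complex \<Rightarrow> complex \<Rightarrow> real" where
  "sG G x y = cmod (x - y) / Inf {cmod (x - z) + cmod (z - y) | z. z \<in> frontier G}"

definition pG :: "complex set \<Rightarrow> complex \<Rightarrow> complex \<Rightarrow> real" where
  "pG G x y = cmod (x - y) / sqrt ((cmod (x - y))\<^sup>2 + 4 * dG G x * dG G y)"

end

(*
  The complement C of S_theta is a closed convex cone of opening 2 pi - theta < pi, so C + C is
  contained in C. Hence for a boundary point z the points x - z, y - z stay in the sector and
  z + C lies outside it, so d(x) is at most |x - z| times the distance from the unit vector in
  the direction of x - z to C. With the law of cosines this reduces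
  |x - y|^2 + 4 d(x) d(y) <= (1 - cos (theta/2)) (|x - z| + |z - y|)^2
  to a trigonometric inequality, checked according to which part of C (either edge or the
  vertex) is nearest to x - z and to y - z. As 1 - cos (theta/2) = 2 sin^2 (theta/4), the infimum
  over z gives the bound; it is attained at x = e^(i theta/4), y = e^(3 i theta/4), with z = 0.
*)
theory Submission
  imports Defs
begin

lemma rcis_cmod_Arg2pi: "rcis (cmod z) (Arg2pi z) = z"
  using Arg2pi_eq[of z] by (simp add: rcis_def cis_conv_exp)

lemma cmod_rcis_diff_sq:
  "(cmod (rcis r a - rcis p b))\<^sup>2 = r\<^sup>2 + p\<^sup>2 - 2 * r * p * cos (a - b)"
proof -
  have "(cmod (rcis r a - rcis p b))\<^sup>2 = (r * cos a - p * cos b)\<^sup>2 + (r * sin a - p * sin b)\<^sup>2"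
    by (simp add: cmod_power2)
  also have "\<dots> = r\<^sup>2 * ((sin a)\<^sup>2 + (cos a)\<^sup>2) + p\<^sup>2 * ((sin b)\<^sup>2 + (cos b)\<^sup>2)
      - 2 * r * p * (cos a * cos b + sin a * sin b)"
    by algebra
  finally show ?thesis by (simp add: cos_diff)
qed

lemma cmod_rcis_minus_projection:
  assumes "0 \<le> r"
  shows "cmod (rcis r a - rcis (r * cos (a - e)) e) = r * \<bar>sin (a - e)\<bar>"
proof -
  have "(cmod (rcis r a - rcis (r * cos (a - e)) e))\<^sup>2 = (r * \<bar>sin (a - e)\<bar>)\<^sup>2"
    unfolding cmod_rcis_diff_sq power_mult_distrib power2_abs
    using sin_cos_squared_add[of "a - e"] by algebra
  then show ?thesis using assms by (simp add: power2_eq_iff_nonneg)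
qed

lemma Arg2pi_cis:
  assumes "0 \<le> a" "a < 2 * pi"
  shows "Arg2pi (cis a) = a"
  using assms by (intro Arg2pi_unique[of 1]) (auto simp: cis_conv_exp)

lemma cis_in_sector:
  assumes "0 < a" "a < t" "t \<le> 2 * pi"
  shows "cis a \<in> sector t"
  using assms Arg2pi_cis[of a] by (simp add: sector_def)

(* The closed cone between the rays of angle t and 2 pi; the second condition says that w lies
   clockwise of the ray of angle t. *)
definition sector_compl :: "real \<Rightarrow> complex set" where
  "sector_compl t = {w. Im w \<le> 0 \<and> 0 \<le> Im (cis (- t) * w)}"

lemma sector_compl_add:
  "v \<in> sector_compl t \<Longrightarrow> w \<in> sector_compl t \<Longrightarrow> v + w \<in> sector_compl t"
  by (simp add: sector_compl_def distrib_left)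

lemma rcis_in_sector_compl:
  assumes "sin t \<le> 0" "0 \<le> \<rho>"
  shows "complex_of_real \<rho> \<in> sector_compl t" "rcis \<rho> t \<in> sector_compl t"
  using assms
  by (auto simp: sector_compl_def rcis_def mult_nonneg_nonpos mult_nonpos_nonneg mult.left_commute)

lemma sector_eq_Compl:
  assumes "pi < t" "t < 2 * pi"
  shows "sector t = - sector_compl t"
proof (intro set_eqI)
  fix x
  define r a where "r = cmod x" and "a = Arg2pi x"
  have x: "x = rcis r a" using rcis_cmod_Arg2pi[of x] by (simp add: r_def a_def)
  have a: "0 \<le> a" "a < 2 * pi" using Arg2pi[of x] by (auto simp: a_def)
  show "x \<in> sector t \<longleftrightarrow> x \<in> - sector_compl t"
  proof (cases "x = 0")
    case True
    then show ?thesis by (simp add: sector_def sector_compl_def)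
  next
    case False
    then have r: "0 < r" by (simp add: r_def)
    have "cis (- t) * x = rcis r (a - t)" by (simp add: x rcis_def cis_mult mult.left_commute)
    then have "x \<in> sector_compl t \<longleftrightarrow> r * sin a \<le> 0 \<and> 0 \<le> r * sin (a - t)"
      unfolding sector_compl_def mem_Collect_eq by (simp add: x)
    also have "\<dots> \<longleftrightarrow> sin a \<le> 0 \<and> 0 \<le> sin (a - t)"
      using r by (simp add: mult_le_0_iff zero_le_mult_iff)
    also have "\<dots> \<longleftrightarrow> \<not> (0 < a \<and> a < t)"
    proof
      assume "sin a \<le> 0 \<and> 0 \<le> sin (a - t)"
      moreover have "0 < sin a" if "0 < a" "a < pi" using that by (rule sin_gt_zero)
      moreover have "sin (a - t) < 0" if "pi \<le> a" "a < t"
        using sin_gt_zero[of "t - a"] sin_minus[of "t - a"] that assms by simp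
      ultimately show "\<not> (0 < a \<and> a < t)" by force
    next
      assume "\<not> (0 < a \<and> a < t)"
      then consider "a = 0" | "t \<le> a" using a by linarith
      then show "sin a \<le> 0 \<and> 0 \<le> sin (a - t)"
      proof cases
        case 1
        then show ?thesis using sin_lt_zero[of t] assms by simp
      next
        case 2
        then show ?thesis using sin_le_zero[of a] sin_ge_zero[of "a - t"] a assms by auto
      qed
    qed
    finally show ?thesis by (simp add: sector_def a_def)
  qed
qed

lemma sector_diff_in_sector:
  assumes "pi < t" "t < 2 * pi" "x \<in> sector t" "z \<in> sector_compl t"
  shows "x - z \<in> sector t"
  using sector_compl_add[OF assms(4), of "x - z"] assms by (auto simp: sector_eq_Compl)

lemma closed_sector_compl: "closed (sector_compl t)"
  unfolding sector_compl_def by (intro closed_Collect_conj closed_Collect_le continuous_intros)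

lemma open_sector:
  assumes "pi < t" "t < 2 * pi"
  shows "open (sector t)"
  using closed_sector_compl by (simp add: sector_eq_Compl[OF assms] open_Compl)

lemma frontier_sector_subset:
  assumes "pi < t" "t < 2 * pi"
  shows "frontier (sector t) \<subseteq> sector_compl t"
  using open_sector[OF assms] by (auto simp: frontier_def interior_open sector_eq_Compl[OF assms])

lemma zero_in_frontier_sector:
  assumes "pi < t" "t < 2 * pi"
  shows "0 \<in> frontier (sector t)"
proof -
  have "0 \<in> closure (sector t)"
  proof (unfold closure_approachable, intro allI impI)
    fix e :: real
    assume "0 < e"
    then have "rcis (e / 2) (pi / 2) \<in> sector t \<and> dist (rcis (e / 2) (pi / 2)) 0 < e"
      using assms by (simp add: rcis_def norm_mult sector_eq_Compl[OF assms] sector_compl_def)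
    then show "\<exists>y\<in>sector t. dist y 0 < e" by blast
  qed
  then show ?thesis
    using open_sector[OF assms] by (simp add: frontier_def interior_open sector_def)
qed

lemma dG_le_dist_outside:
  assumes "x \<in> S" "c \<notin> S"
  shows "dG S x \<le> cmod (x - c)"
proof -
  obtain w where w: "w \<in> closed_segment x c" "w \<in> frontier S"
    using connected_Int_frontier[of "closed_segment x c" S] assms by auto
  have "dG S x \<le> cmod (x - w)"
    unfolding dG_def by (rule cInf_lower) (use w in \<open>auto intro!: bdd_belowI[of _ 0]\<close>)
  also have "\<dots> \<le> cmod (x - c)"
    using dist_in_closed_segment[OF w(1)] by (simp add: dist_norm norm_minus_commute)
  finally show ?thesis .
qed

lemma dG_ge:
  assumes "frontier S \<noteq> {}" "\<And>z. z \<in> frontier S \<Longrightarrow> d \<le> cmod (x - z)"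
  shows "d \<le> dG S x"
  unfolding dG_def by (rule cInf_greatest) (use assms in auto)

lemma dG_nonneg: "frontier S \<noteq> {} \<Longrightarrow> 0 \<le> dG S x"
  by (rule dG_ge) auto

lemma sG_ge:
  assumes "z \<in> frontier G"
  shows "cmod (x - y) / (cmod (x - z) + cmod (z - y)) \<le> sG G x y"
proof (cases "x = y")
  case True
  then show ?thesis by (simp add: sG_def)
next
  case False
  define E where "E = {cmod (x - z) + cmod (z - y) | z. z \<in> frontier G}"
  have "cmod (x - y) \<le> Inf E"
    unfolding E_def using assms dist_triangle[of x y]
    by (intro cInf_greatest) (auto simp: dist_norm)
  moreover have "Inf E \<le> cmod (x - z) + cmod (z - y)"
    unfolding E_def using assms by (intro cInf_lower) (auto intro!: bdd_belowI[of _ 0])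
  moreover have "0 < cmod (x - y)" using False by simp
  ultimately have "cmod (x - y) / (cmod (x - z) + cmod (z - y)) \<le> cmod (x - y) / Inf E"
    by (intro divide_left_mono mult_pos_pos) linarith+
  then show ?thesis by (simp add: sG_def E_def)
qed

lemma pG_pos:
  assumes "frontier G \<noteq> {}" "x \<noteq> y"
  shows "0 < pG G x y"
  using assms dG_nonneg[OF assms(1), of x] dG_nonneg[OF assms(1), of y]
  by (simp add: pG_def add_pos_nonneg)

lemma pG_le:
  assumes "frontier G \<noteq> {}" "0 \<le> d" "d \<le> dG G x" "d \<le> dG G y"
  shows "pG G x y \<le> cmod (x - y) / sqrt ((cmod (x - y))\<^sup>2 + 4 * d\<^sup>2)"
proof (cases "x = y")
  case True
  then show ?thesis by (simp add: pG_def)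
next
  case False
  have "d\<^sup>2 \<le> dG G x * dG G y"
    using assms by (simp add: power2_eq_square mult_mono)
  moreover have "0 < (cmod (x - y))\<^sup>2 + 4 * d\<^sup>2"
    using False by (simp add: add_pos_nonneg)
  ultimately show ?thesis
    unfolding pG_def by (intro divide_left_mono mult_pos_pos) auto
qed

lemma sG_le_mult_pG:
  assumes "frontier G \<noteq> {}" "0 < K"
    and bound: "\<And>z. z \<in> frontier G \<Longrightarrow>
      (cmod (x - y))\<^sup>2 + 4 * dG G x * dG G y \<le> K\<^sup>2 * (cmod (x - z) + cmod (z - y))\<^sup>2"
  shows "sG G x y \<le> K * pG G x y"
proof (cases "x = y")
  case True
  then show ?thesis by (simp add: sG_def pG_def)
next
  case False
  define Q where "Q = sqrt ((cmod (x - y))\<^sup>2 + 4 * dG G x * dG G y)"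
  have Q: "0 < Q"
    using False dG_nonneg[OF assms(1), of x] dG_nonneg[OF assms(1), of y]
    by (simp add: Q_def add_pos_nonneg)
  have "Q / K \<le> Inf {cmod (x - z) + cmod (z - y) | z. z \<in> frontier G}"
  proof (rule cInf_greatest)
    show "{cmod (x - z) + cmod (z - y) | z. z \<in> frontier G} \<noteq> {}" using assms(1) by blast
  next
    fix e assume "e \<in> {cmod (x - z) + cmod (z - y) | z. z \<in> frontier G}"
    then obtain z where z: "z \<in> frontier G" "e = cmod (x - z) + cmod (z - y)" by blast
    have "Q \<le> K * e"
      using bound[OF z(1)] Q assms(2) unfolding Q_def z(2)
      by (intro real_le_lsqrt) (auto simp: power_mult_distrib)
    then show "Q / K \<le> e" using assms(2) by (simp add: divide_le_eq mult.commute)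
  qed
  moreover have "0 < Q / K" using Q assms(2) by simp
  ultimately have "sG G x y \<le> cmod (x - y) / (Q / K)"
    unfolding sG_def by (intro divide_left_mono mult_pos_pos) auto
  also have "\<dots> = K * pG G x y"
    by (simp add: pG_def Q_def)
  finally show ?thesis .
qed

(* The distance from cis a, 0 < a < t, to sector_compl t: the nearest point lies on the ray of
   angle 0, on the ray of angle t, or is the vertex 0. *)
definition compl_dist :: "real \<Rightarrow> real \<Rightarrow> real" where
  "compl_dist t a = (if a \<le> pi/2 then sin a else if t - a \<le> pi/2 then sin (t - a) else 1)"

lemma compl_dist_reflect:
  assumes "pi < t"
  shows "compl_dist t (t - a) = compl_dist t a"
  using assms by (simp add: compl_dist_def)

lemma cos_half_nonpos:
  assumes "pi \<le> t" "t \<le> 2 * pi"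
  shows "cos (t / 2) \<le> 0"
proof -
  have "cos (t / 2) \<le> cos (pi / 2)"
    by (rule cos_monotone_0_pi_le) (use assms in auto)
  then show ?thesis by simp
qed

lemma sin_cos_combination_sq_le: "(p * sin a + q * cos a)\<^sup>2 \<le> p\<^sup>2 + (q\<^sup>2 :: real)"
proof -
  have "(p * sin a + q * cos a)\<^sup>2 + (p * cos a - q * sin a)\<^sup>2 = p\<^sup>2 + q\<^sup>2"
    using sin_cos_squared_add[of a] by algebra
  then show ?thesis by (metis le_add_same_cancel1 zero_le_power2)
qed

lemma trig_bound_same_edge: "2 * sin a * sin b - cos (a - b) \<le> (1 :: real)"
proof -
  have "2 * sin a * sin b - cos (a - b) = - cos (a + b)"
    by (simp add: cos_diff cos_add)
  then show ?thesis using cos_ge_minus_one[of "a + b"] by linarith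
qed

lemma trig_bound_opposite_edges:
  fixes a b t :: real
  assumes "cos (t / 2) \<le> 0"
  shows "2 * sin a * sin b - cos (a + b - t) \<le> 1 - 2 * cos (t / 2)"
proof -
  have "2 * sin a * sin b - cos (a + b - t) = cos (a - b) - (cos (a + b) + cos (a + b - t))"
    by (simp add: cos_diff cos_add)
  also have "cos (a + b) + cos (a + b - t) = 2 * cos (a + b - t / 2) * cos (t / 2)"
    by (simp add: cos_plus_cos field_simps)
  finally have "2 * sin a * sin b - cos (a + b - t)
      = cos (a - b) - 2 * cos (a + b - t / 2) * cos (t / 2)" .
  moreover have "cos (t / 2) \<le> cos (a + b - t / 2) * cos (t / 2)"
    using assms cos_le_one[of "a + b - t / 2"] by (simp add: mult_le_cancel_right1)
  ultimately show ?thesis using cos_le_one[of "a - b"] by linarith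
qed

lemma minus_cos_le_sin_middle:
  fixes b t :: real
  assumes "pi / 2 \<le> b" "b \<le> t - pi / 2" "t \<le> 2 * pi"
  shows "- cos t \<le> sin b"
proof -
  have "cos (t - pi) \<le> cos (b - pi / 2)"
    by (rule cos_monotone_0_pi_le) (use assms in auto)
  then show ?thesis by (simp add: cos_diff)
qed

lemma trig_bound_edge_vertex:
  fixes a b t :: real
  assumes "cos (t / 2) \<le> 0" "- cos t \<le> sin b"
  shows "2 * sin a - cos (a - b) \<le> 1 - 2 * cos (t / 2)"
proof -
  define c where "c = cos (t / 2)"
  have "(2 * sin a - cos (a - b))\<^sup>2 = ((2 - sin b) * sin a + (- cos b) * cos a)\<^sup>2"
    by (simp add: cos_diff algebra_simps)
  also have "\<dots> \<le> (2 - sin b)\<^sup>2 + (- cos b)\<^sup>2"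
    by (rule sin_cos_combination_sq_le)
  also have "\<dots> = 5 - 4 * sin b"
    using sin_cos_squared_add[of b] by algebra
  also have "\<dots> \<le> 1 + 8 * c\<^sup>2"
    using assms(2) cos_double_cos[of "t / 2"] unfolding c_def by simp
  also have "\<dots> \<le> (1 - 2 * c)\<^sup>2"
  proof -
    have "0 \<le> (- c) * (1 + c)"
      using assms(1) cos_ge_minus_one[of "t / 2"] unfolding c_def
      by (intro mult_nonneg_nonneg) linarith+
    moreover have "(1 - 2 * c)\<^sup>2 - (1 + 8 * c\<^sup>2) = 4 * ((- c) * (1 + c))"
      by algebra
    ultimately show ?thesis by linarith
  qed
  finally have "(2 * sin a - cos (a - b))\<^sup>2 \<le> (1 - 2 * c)\<^sup>2" .
  then have "2 * sin a - cos (a - b) \<le> 1 - 2 * c"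
    by (rule power2_le_imp_le) (use assms(1) c_def in linarith)
  then show ?thesis by (simp add: c_def)
qed

lemma trig_bound_vertex_vertex:
  fixes a b t :: real
  assumes "pi / 2 \<le> a" "a \<le> t - pi / 2" "pi / 2 \<le> b" "b \<le> t - pi / 2" "t \<le> 2 * pi"
    and "cos (t / 2) \<le> 0"
  shows "2 - cos (a - b) \<le> 1 - 2 * cos (t / 2)"
proof -
  define c where "c = cos (t / 2)"
  have "cos (t - pi) \<le> cos \<bar>a - b\<bar>"
    by (rule cos_monotone_0_pi_le) (use assms in auto)
  moreover have "cos (t - pi) = 1 - 2 * c\<^sup>2"
    using cos_double_cos[of "t / 2"] by (simp add: cos_diff c_def)
  moreover have "0 \<le> (- c) * (1 + c)"
    using assms(6) cos_ge_minus_one[of "t / 2"] unfolding c_def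
    by (intro mult_nonneg_nonneg) linarith+
  ultimately show ?thesis
    unfolding c_def by (simp add: power2_eq_square algebra_simps)
qed

lemma trig_bound_edge:
  fixes a b t :: real
  assumes "pi < t" "t < 2 * pi" "a \<le> pi / 2" "0 < b" "b < t"
  shows "2 * sin a * compl_dist t b - cos (a - b) \<le> 1 - 2 * cos (t / 2)"
proof -
  have c: "cos (t / 2) \<le> 0" using assms by (intro cos_half_nonpos) auto
  consider "b \<le> pi / 2" | "\<not> b \<le> pi / 2" "t - b \<le> pi / 2"
    | "\<not> b \<le> pi / 2" "\<not> t - b \<le> pi / 2"
    by blast
  then show ?thesis
  proof cases
    case 1
    then show ?thesis
      using trig_bound_same_edge[of a b] c by (simp add: compl_dist_def)
  next
    case 2
    then show ?thesis
      using trig_bound_opposite_edges[OF c, of a "t - b"] by (simp add: compl_dist_def)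
  next
    case 3
    then have "- cos t \<le> sin b"
      using assms by (intro minus_cos_le_sin_middle) auto
    then show ?thesis
      using trig_bound_edge_vertex[OF c, of b a] 3 by (simp add: compl_dist_def)
  qed
qed

lemma compl_dist_product_bound:
  fixes a b t :: real
  assumes t: "pi < t" "t < 2 * pi" and "0 < a" "a < t" "0 < b" "b < t"
  shows "2 * compl_dist t a * compl_dist t b - cos (a - b) \<le> 1 - 2 * cos (t / 2)"
proof -
  have near_edge: "2 * compl_dist t a * compl_dist t b - cos (a - b) \<le> 1 - 2 * cos (t / 2)"
    if "a \<le> pi / 2 \<or> t - a \<le> pi / 2" "0 < a" "a < t" "0 < b" "b < t" for a b
    using that(1)
  proof
    assume "a \<le> pi / 2"
    then show ?thesis
      using trig_bound_edge[OF t _ that(4,5)] by (simp add: compl_dist_def)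
  next
    \<comment> \<open>reflect the sector in its bisector\<close>
    assume a: "t - a \<le> pi / 2"
    have "2 * sin (t - a) * compl_dist t (t - b) - cos ((t - a) - (t - b)) \<le> 1 - 2 * cos (t / 2)"
      using a t that by (intro trig_bound_edge) auto
    moreover have "compl_dist t a = sin (t - a)"
      using a t by (simp add: compl_dist_def)
    moreover have "cos ((t - a) - (t - b)) = cos (a - b)"
      using cos_minus[of "a - b"] by simp
    ultimately show ?thesis
      using compl_dist_reflect[OF t(1), of b] by simp
  qed
  consider "a \<le> pi / 2 \<or> t - a \<le> pi / 2" | "b \<le> pi / 2 \<or> t - b \<le> pi / 2"
    | "\<not> (a \<le> pi / 2 \<or> t - a \<le> pi / 2)" "\<not> (b \<le> pi / 2 \<or> t - b \<le> pi / 2)"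
    by blast
  then show ?thesis
  proof cases
    case 1
    then show ?thesis using near_edge assms by simp
  next
    case 2
    then show ?thesis
      using near_edge[of b a] assms cos_minus[of "a - b"] by (simp add: mult_ac)
  next
    case 3
    have "cos (t / 2) \<le> 0"
      using t by (intro cos_half_nonpos) auto
    then have "2 - cos (a - b) \<le> 1 - 2 * cos (t / 2)"
      using 3 t by (intro trig_bound_vertex_vertex) linarith+
    moreover have "compl_dist t a = 1" "compl_dist t b = 1"
      using 3 by (simp_all add: compl_dist_def)
    ultimately show ?thesis by simp
  qed
qed

lemma dG_sector_le_compl_dist:
  assumes t: "pi < t" "t < 2 * pi" and x: "x \<in> sector t" and z: "z \<in> sector_compl t"
  shows "dG (sector t) x \<le> cmod (x - z) * compl_dist t (Arg2pi (x - z))"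
proof -
  define r a where "r = cmod (x - z)" and "a = Arg2pi (x - z)"
  have u: "x - z = rcis r a" using rcis_cmod_Arg2pi[of "x - z"] by (simp add: r_def a_def)
  have a: "0 < a" "a < t" using sector_diff_in_sector[OF assms] by (simp_all add: sector_def a_def)
  have r: "0 \<le> r" by (simp add: r_def)
  have sin_t: "sin t \<le> 0" using sin_lt_zero[of t] t by simp
  have to_compl: "dG (sector t) x \<le> cmod (rcis r a - c)" if "c \<in> sector_compl t" for c
  proof -
    have "z + c \<notin> sector t"
      using sector_compl_add[OF z that] by (simp add: sector_eq_Compl[OF t])
    then have "dG (sector t) x \<le> cmod (x - (z + c))" by (rule dG_le_dist_outside[OF x])
    then show ?thesis by (simp add: u[symmetric] algebra_simps)
  qed
  consider "a \<le> pi / 2" | "\<not> a \<le> pi / 2" "t - a \<le> pi / 2"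
    | "\<not> a \<le> pi / 2" "\<not> t - a \<le> pi / 2"
    by blast
  then have "dG (sector t) x \<le> r * compl_dist t a"
  proof cases
    case 1
    have "0 \<le> r * cos (a - 0)" using 1 a r by (simp add: cos_ge_zero)
    then have "rcis (r * cos (a - 0)) 0 \<in> sector_compl t"
      unfolding rcis_zero_arg by (rule rcis_in_sector_compl(1)[OF sin_t])
    then have "dG (sector t) x \<le> cmod (rcis r a - rcis (r * cos (a - 0)) 0)"
      by (rule to_compl)
    also have "\<dots> = r * \<bar>sin a\<bar>" using cmod_rcis_minus_projection[OF r, of a 0] by simp
    finally show ?thesis using 1 a sin_ge_zero[of a] by (simp add: compl_dist_def)
  next
    case 2
    have "0 \<le> r * cos (a - t)" using 2 a r by (simp add: cos_ge_zero)
    then have "rcis (r * cos (a - t)) t \<in> sector_compl t"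
      by (rule rcis_in_sector_compl(2)[OF sin_t])
    then have "dG (sector t) x \<le> cmod (rcis r a - rcis (r * cos (a - t)) t)"
      by (rule to_compl)
    also have "\<dots> = r * \<bar>sin (a - t)\<bar>" by (rule cmod_rcis_minus_projection[OF r])
    also have "\<bar>sin (a - t)\<bar> = sin (t - a)"
      using 2 a sin_ge_zero[of "t - a"] sin_minus[of "t - a"] by simp
    finally show ?thesis using 2 by (simp add: compl_dist_def)
  next
    case 3
    have "(0 :: complex) \<in> sector_compl t" by (simp add: sector_compl_def)
    then have "dG (sector t) x \<le> cmod (rcis r a - 0)" by (rule to_compl)
    then show ?thesis using 3 r by (simp add: compl_dist_def)
  qed
  then show ?thesis by (simp add: r_def a_def)
qed

lemma sector_dist_dG_le:
  assumes t: "pi < t" "t < 2 * pi"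
    and x: "x \<in> sector t" and y: "y \<in> sector t" and z: "z \<in> sector_compl t"
  shows "(cmod (x - y))\<^sup>2 + 4 * dG (sector t) x * dG (sector t) y
    \<le> (1 - cos (t / 2)) * (cmod (x - z) + cmod (z - y))\<^sup>2"
proof -
  define r a p b where "r = cmod (x - z)" and "a = Arg2pi (x - z)"
    and "p = cmod (y - z)" and "b = Arg2pi (y - z)"
  define c where "c = cos (t / 2)"
  define dx dy where "dx = dG (sector t) x" and "dy = dG (sector t) y"
  have fr: "frontier (sector t) \<noteq> {}" using zero_in_frontier_sector[OF t] by blast
  have ab: "0 < a" "a < t" "0 < b" "b < t"
    using sector_diff_in_sector[OF t x z] sector_diff_in_sector[OF t y z]
    by (simp_all add: sector_def a_def b_def)
  have rp: "0 \<le> r" "0 \<le> p" by (simp_all add: r_def p_def)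
  have "x - y = rcis r a - rcis p b"
    using rcis_cmod_Arg2pi[of "x - z"] rcis_cmod_Arg2pi[of "y - z"]
    by (simp add: r_def a_def p_def b_def)
  then have dist: "(cmod (x - y))\<^sup>2 = r\<^sup>2 + p\<^sup>2 - 2 * r * p * cos (a - b)"
    by (simp add: cmod_rcis_diff_sq)
  have "dx * dy \<le> (r * compl_dist t a) * (p * compl_dist t b)"
    using dG_sector_le_compl_dist[OF t x z] dG_sector_le_compl_dist[OF t y z]
      dG_nonneg[OF fr, of x] dG_nonneg[OF fr, of y]
    by (intro mult_mono) (auto simp: dx_def dy_def r_def a_def p_def b_def)
  moreover have "r * p * (2 * compl_dist t a * compl_dist t b - cos (a - b)) \<le> r * p * (1 - 2 * c)"
    using compl_dist_product_bound[OF t ab] rp by (simp add: c_def mult_left_mono)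
  moreover have "0 \<le> (- c) * (r - p)\<^sup>2"
    using cos_half_nonpos[of t] t unfolding c_def by (intro mult_nonneg_nonneg) auto
  moreover have "(1 - c) * (r + p)\<^sup>2 = r\<^sup>2 + p\<^sup>2 + 2 * r * p * (1 - 2 * c) + (- c) * (r - p)\<^sup>2"
    by algebra
  moreover have "cmod (z - y) = p" by (simp add: p_def norm_minus_commute)
  ultimately show ?thesis
    unfolding dist dx_def[symmetric] dy_def[symmetric] c_def[symmetric] r_def[symmetric]
    by (simp add: algebra_simps)
qed

lemma dG_sector_ge:
  assumes t: "pi < t" "t < 2 * pi"
  shows "Im x \<le> dG (sector t) x" "- Im (cis (- t) * x) \<le> dG (sector t) x"
proof -
  have fr: "frontier (sector t) \<noteq> {}" using zero_in_frontier_sector[OF t] by blast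
  have z: "Im z \<le> 0 \<and> 0 \<le> Im (cis (- t) * z)" if "z \<in> frontier (sector t)" for z
    using frontier_sector_subset[OF t] that by (auto simp: sector_compl_def)
  show "Im x \<le> dG (sector t) x"
  proof (rule dG_ge[OF fr])
    fix w assume "w \<in> frontier (sector t)"
    then show "Im x \<le> cmod (x - w)"
      using z abs_Im_le_cmod[of "x - w"] by fastforce
  qed
  show "- Im (cis (- t) * x) \<le> dG (sector t) x"
  proof (rule dG_ge[OF fr])
    fix w assume "w \<in> frontier (sector t)"
    moreover have "Im (cis (- t) * (w - x)) \<le> cmod (w - x)"
      using abs_Im_le_cmod[of "cis (- t) * (w - x)"] by (simp add: norm_mult)
    ultimately show "- Im (cis (- t) * x) \<le> cmod (x - w)"
      using z by (fastforce simp: right_diff_distrib norm_minus_commute)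
  qed
qed

lemma sector_pG_sG_extremal:
  assumes t: "pi < t" "t < 2 * pi"
  shows "sqrt 2 * sin (t / 4) * pG (sector t) (cis (t / 4)) (cis (3 * t / 4))
    \<le> sG (sector t) (cis (t / 4)) (cis (3 * t / 4))"
proof -
  define S x y where "S = sin (t / 4)" and "x = cis (t / 4)" and "y = cis (3 * t / 4)"
  have S: "0 < S" using t by (simp add: S_def sin_gt_zero)
  have fr: "frontier (sector t) \<noteq> {}" using zero_in_frontier_sector[OF t] by blast
  have "(cmod (x - y))\<^sup>2 = 2 - 2 * cos (t / 2)"
    using cmod_rcis_diff_sq[of 1 "t / 4" 1 "3 * t / 4"] by (simp add: x_def y_def cis_rcis_eq)
  also have "\<dots> = (2 * S)\<^sup>2"
    using cos_double_sin[of "t / 4"] by (simp add: S_def power2_eq_square)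
  finally have D: "cmod (x - y) = 2 * S"
    by (rule power2_eq_imp_eq) (use S in auto)
  have "S \<le> dG (sector t) x"
    using dG_sector_ge(1)[OF t, of x] by (simp add: S_def x_def)
  moreover have "S \<le> dG (sector t) y"
    using dG_sector_ge(2)[OF t, of y] by (simp add: S_def y_def cis_mult)
  ultimately have "pG (sector t) x y \<le> cmod (x - y) / sqrt ((cmod (x - y))\<^sup>2 + 4 * S\<^sup>2)"
    using S by (intro pG_le[OF fr]) auto
  also have "sqrt ((cmod (x - y))\<^sup>2 + 4 * S\<^sup>2) = sqrt ((2 * sqrt 2 * S)\<^sup>2)"
    unfolding D by (simp add: power_mult_distrib)
  also have "\<dots> = 2 * sqrt 2 * S"
    using S by simp
  finally have "sqrt 2 * S * pG (sector t) x y \<le> S"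
    using S D by (simp add: field_simps)
  also have "S = cmod (x - y) / (cmod (x - 0) + cmod (0 - y))"
    using D by (simp add: x_def y_def)
  also have "\<dots> \<le> sG (sector t) x y"
    using zero_in_frontier_sector[OF t] by (rule sG_ge)
  finally show ?thesis by (simp add: S_def x_def y_def)
qed

theorem theorem3p10:
  fixes \<theta> :: real
  assumes "pi < \<theta>" and "\<theta> < 2 * pi"
  shows "(\<forall>x\<in>sector \<theta>. \<forall>y\<in>sector \<theta>.
            sG (sector \<theta>) x y \<le> sqrt 2 * sin (\<theta> / 4) * pG (sector \<theta>) x y)
       \<and> (\<forall>c < sqrt 2 * sin (\<theta> / 4). \<exists>x\<in>sector \<theta>. \<exists>y\<in>sector \<theta>.
            c * pG (sector \<theta>) x y < sG (sector \<theta>) x y)"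
proof -
  define K where "K = sqrt 2 * sin (\<theta> / 4)"
  have K: "0 < K" using assms by (simp add: K_def sin_gt_zero)
  have K2: "K\<^sup>2 = 1 - cos (\<theta> / 2)"
    using cos_double_sin[of "\<theta> / 4"] by (simp add: K_def power_mult_distrib)
  have fr: "frontier (sector \<theta>) \<noteq> {}" using zero_in_frontier_sector[OF assms] by blast
  have "sG (sector \<theta>) x y \<le> K * pG (sector \<theta>) x y" if "x \<in> sector \<theta>" "y \<in> sector \<theta>" for x y
    using sG_le_mult_pG[OF fr K] sector_dist_dG_le[OF assms that] frontier_sector_subset[OF assms]
    unfolding K2 by blast
  moreover have "\<exists>x\<in>sector \<theta>. \<exists>y\<in>sector \<theta>. c * pG (sector \<theta>) x y < sG (sector \<theta>) x y"
    if "c < K" for c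
  proof -
    define x y where "x = cis (\<theta> / 4)" and "y = cis (3 * \<theta> / 4)"
    have xy: "x \<in> sector \<theta>" "y \<in> sector \<theta>"
      using assms by (auto simp: x_def y_def intro: cis_in_sector)
    have "x \<noteq> y"
      using assms Arg2pi_cis[of "\<theta> / 4"] Arg2pi_cis[of "3 * \<theta> / 4"] by (force simp: x_def y_def)
    then have "c * pG (sector \<theta>) x y < K * pG (sector \<theta>) x y"
      using that pG_pos[OF fr] by simp
    also have "\<dots> \<le> sG (sector \<theta>) x y"
      using sector_pG_sG_extremal[OF assms] by (simp add: K_def x_def y_def)
    finally show ?thesis using xy by blast
  qed
  ultimately show ?thesis unfolding K_def by blast
qed

end
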